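(* Let $X$ be a Frobenius semiring. (1) $2=4$ in $X$; consequently any $m,n\in\mathbb{N}$ with $m,n\ge2$ and of equal parity are equal in $X$. (2) If $X$ is upper-bound, then $2=3$ in $X$; consequently any $m,n\in\mathbb{N}_{\ge2}$ are equal in $X$.
   Context: A semiring $(X,+,0,\cdot)$: $(X,+,0)$ commutative monoid, $(X,\cdot)$ semigroup, distributivity, $0$ absorbing. A Frobenius semiring is a unital commutative semiring with $(x+y)^n=x^n+y^n$ for all $x,y\in X$, $n\ge1$. A natural number $n$ is identified with $1+\dots+1$ ($n$ times) in $X$. Intrinsic order: $a\le b$ iff $a+x=b$ for some $x$; upper-bound means this preorder is antisymmetric. *)

theory Defs
  imports Main
begin

text \<open>Semiring in the paper's sense (commutative additive monoid, multiplicative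
semigroup, distributive, 0 absorbing) = class comm_semiring_0 when commutative;
unital commutative = additionally comm_monoid_mult. We deliberately avoid
comm_semiring_1, which would add the extra axiom 0 \<noteq> 1.\<close>

fun natX :: "nat \<Rightarrow> 'a::{comm_semiring_0,comm_monoid_mult}" where
  "natX 0 = 0"
| "natX (Suc n) = natX n + 1"

definition frobenius :: "'a::{comm_semiring_0,comm_monoid_mult} itself \<Rightarrow> bool" where
  "frobenius _ \<longleftrightarrow> (\<forall>(x::'a) y (n::nat). n \<ge> 1 \<longrightarrow> (x + y) ^ n = x ^ n + y ^ n)"

definition intrinsic_le :: "'a::comm_monoid_add \<Rightarrow> 'a \<Rightarrow> bool" where
  "intrinsic_le a b \<longleftrightarrow> (\<exists>x. a + x = b)"

definition upper_bound :: "'a::comm_monoid_add itself \<Rightarrow> bool" where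
  "upper_bound _ \<longleftrightarrow> (\<forall>a b::'a. intrinsic_le a b \<longrightarrow> intrinsic_le b a \<longrightarrow> a = b)"

end

theory Submission
  imports Defs
begin

text \<open>In a Frobenius semiring \<open>4 = (1 + 1)\<^sup>2 = 1\<^sup>2 + 1\<^sup>2 = 2\<close>. So the sequence of natural
numbers in \<open>X\<close> is eventually periodic with period 2 from 2 on, which gives (1). If moreover
the intrinsic preorder is antisymmetric, then \<open>2 \<le> 3\<close> and \<open>3 \<le> 3 + 1 = 4 = 2\<close> force
\<open>2 = 3\<close>, so the period drops to 1.\<close>

lemma natX_add:
  "(natX (m + n) :: 'a::{comm_semiring_0,comm_monoid_mult}) = natX m + natX n"
  by (induction n) (simp_all add: add.assoc)

lemma natX_periodic:
  assumes "(natX a :: 'a::{comm_semiring_0,comm_monoid_mult}) = natX (a + p)"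
  shows "(natX (a + k) :: 'a) = natX (a + k mod p)"
proof (induction k rule: less_induct)
  case (less k)
  show ?case
  proof (cases "p \<le> k \<and> p > 0")
    case True
    have "(natX (a + k) :: 'a) = natX (a + p) + natX (k - p)"
      using True natX_add[of "a + p" "k - p"] by simp
    also have "\<dots> = natX (a + (k - p))"
      using assms natX_add[of a "k - p"] by metis
    also have "\<dots> = natX (a + (k - p) mod p)"
      using less[of "k - p"] True by simp
    finally show ?thesis
      using True by (simp add: le_mod_geq)
  qed (auto simp: not_le)
qed

lemma natX_eq_if_mod_eq:
  assumes "(natX a :: 'a::{comm_semiring_0,comm_monoid_mult}) = natX (a + p)"
    and "a \<le> m" "a \<le> n" and "(m - a) mod p = (n - a) mod p"
  shows "(natX m :: 'a) = natX n"
  using natX_periodic[OF assms(1), of "m - a"] natX_periodic[OF assms(1), of "n - a"] assms(2-4)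
  by simp

lemma natX_2_eq_natX_4:
  assumes "frobenius (X :: 'a::{comm_semiring_0,comm_monoid_mult} itself)"
  shows "(natX 2 :: 'a) = natX 4"
proof -
  have "((1::'a) + 1) ^ 2 = 1 ^ 2 + 1 ^ 2"
    using assms unfolding frobenius_def by simp
  moreover have "((1::'a) + 1) ^ 2 = 1 + 1 + 1 + 1"
    by (simp add: power2_eq_square distrib_left distrib_right add.assoc)
  ultimately show ?thesis
    by (simp add: eval_nat_numeral)
qed

lemma natX_2_eq_natX_3:
  assumes "upper_bound (X :: 'a::{comm_semiring_0,comm_monoid_mult} itself)"
    and "(natX 2 :: 'a) = natX 4"
  shows "(natX 2 :: 'a) = natX 3"
proof -
  have "(natX 3 :: 'a) = natX 2 + 1" and "(natX 4 :: 'a) = natX 3 + 1"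
    by (simp_all add: eval_nat_numeral)
  then have "intrinsic_le (natX 2 :: 'a) (natX 3)" and "intrinsic_le (natX 3 :: 'a) (natX 2)"
    using assms(2) unfolding intrinsic_le_def by metis+
  then show ?thesis
    using assms(1) unfolding upper_bound_def by blast
qed

theorem lemma3p3:
  fixes X :: "'a::{comm_semiring_0,comm_monoid_mult} itself"
  assumes "frobenius X"
  shows "((natX 2 :: 'a) = natX 4
          \<and> (\<forall>m n. m \<ge> 2 \<longrightarrow> n \<ge> 2 \<longrightarrow> even m = even n \<longrightarrow> (natX m :: 'a) = natX n))
       \<and> (upper_bound X \<longrightarrow>
          (natX 2 :: 'a) = natX 3
          \<and> (\<forall>m n. m \<ge> 2 \<longrightarrow> n \<ge> 2 \<longrightarrow> (natX m :: 'a) = natX n))"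
proof -
  have two_four: "(natX 2 :: 'a) = natX (2 + 2)"
    using natX_2_eq_natX_4[OF assms] by simp
  have "(natX m :: 'a) = natX n" if "m \<ge> 2" "n \<ge> 2" "even m = even n" for m n
  proof -
    have "(m - 2) mod 2 = (n - 2) mod 2"
      using that by (auto simp: mod2_eq_if)
    then show ?thesis
      using natX_eq_if_mod_eq[OF two_four] that by blast
  qed
  moreover have "(natX 2 :: 'a) = natX 3 \<and> (\<forall>m n. m \<ge> 2 \<longrightarrow> n \<ge> 2 \<longrightarrow> (natX m :: 'a) = natX n)"
    if "upper_bound X"
  proof -
    have two_three: "(natX 2 :: 'a) = natX (2 + 1)"
      using natX_2_eq_natX_3[OF that natX_2_eq_natX_4[OF assms]] by simp
    have "(natX m :: 'a) = natX n" if "m \<ge> 2" "n \<ge> 2" for m n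
      using natX_eq_if_mod_eq[OF two_three, of m n] that by simp
    moreover have "(natX 2 :: 'a) = natX 3"
      using two_three by simp
    ultimately show ?thesis
      by blast
  qed
  moreover have "(natX 2 :: 'a) = natX 4"
    using two_four by simp
  ultimately show ?thesis
    by blast
qed

end
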